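(* Let $q$ be a prime power and $G=\mathrm{PGL}_3(q)$ acting on the points of $\mathrm{PG}_2(q)$. The maximal size of an independent set of the derangement graph $\Gamma_G$ is $q^3(q^2-1)(q-1)$.
   Context: A derangement is an element fixing no point of $\mathrm{PG}_2(q)$. The derangement graph $\Gamma_G$ has vertex set $G$, with $g,h$ adjacent iff $gh^{-1}$ is a derangement. *)

theory Defs
  imports "HOL-Analysis.Analysis"
begin

text \<open>Throughout, the finite field GF(q) is a type 'a of class {field, finite}; q = CARD('a).
  Points of PG_2(q) are the 1-dimensional subspaces of 'a^3, represented as the set of
  nonzero vectors spanning it.  Elements of PGL_3(q) are the classes of invertible
  3x3 matrices modulo nonzero scalar matrices.\<close>

definition PG2_points :: "('a::{field,finite} ^ 3) set set" where
  "PG2_points = {{c *s v | c. c \<noteq> 0} | v. v \<noteq> 0}"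

definition PGL3 :: "('a::{field,finite} ^ 3 ^ 3) set set" where
  "PGL3 = {{mat c ** A | c. c \<noteq> 0} | A. invertible A}"

definition pgl_act :: "('a::{field,finite} ^ 3 ^ 3) set \<Rightarrow> ('a ^ 3) set \<Rightarrow> ('a ^ 3) set" where
  "pgl_act g P = {A *v v | A v. A \<in> g \<and> v \<in> P}"

definition pgl_mult :: "('a::{field,finite} ^ 3 ^ 3) set \<Rightarrow> ('a ^ 3 ^ 3) set \<Rightarrow> ('a ^ 3 ^ 3) set" where
  "pgl_mult g h = {A ** B | A B. A \<in> g \<and> B \<in> h}"

definition pgl_inv :: "('a::{field,finite} ^ 3 ^ 3) set \<Rightarrow> ('a ^ 3 ^ 3) set" where
  "pgl_inv g = {B. \<exists>A\<in>g. B ** A = mat 1}"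

definition derangement :: "('a::{field,finite} ^ 3 ^ 3) set \<Rightarrow> bool" where
  "derangement g \<longleftrightarrow> g \<in> PGL3 \<and> (\<forall>P\<in>PG2_points. pgl_act g P \<noteq> P)"

definition derangement_adj :: "('a::{field,finite} ^ 3 ^ 3) set \<Rightarrow> ('a ^ 3 ^ 3) set \<Rightarrow> bool" where
  "derangement_adj g h \<longleftrightarrow> derangement (pgl_mult g (pgl_inv h))"

definition independent_set :: "('a::{field,finite} ^ 3 ^ 3) set set \<Rightarrow> bool" where
  "independent_set S \<longleftrightarrow> S \<subseteq> PGL3 \<and> (\<forall>g\<in>S. \<forall>h\<in>S. \<not> derangement_adj g h)"

end

theory Submission
  imports Defs
begin

text \<open>Let C be a Singer subgroup of G = PGL_3(q), the image of the multiplicative group of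
  GF(q^3) acting on GF(q)^3 = GF(q^3); it acts regularly on the points of PG_2(q).  If g c^-1 =
  g' c'^-1 with g, g' in an independent set S and c, c' in C, then g' g^-1 = g (c^-1 c') g^-1
  fixes a point, which forces c = c' since the nontrivial elements of C fix no point.  Hence
  (c, g) \<mapsto> g c^-1 is injective on C \<times> S and |C| |S| \<le> |G|.  On the other hand, by
  transitivity of C every element of G has the form g c^-1 with g in the stabiliser Stab of a
  point, so |G| \<le> |C| |Stab|.  Thus Stab, which is clearly independent, is a largest independent
  set, and it has q^2 |GL_2(q)| = q^3 (q^2 - 1) (q - 1) elements.\<close>

lemma mat_mult_left: "mat c ** (A::'a::comm_ring_1^'n^'m) = (\<chi> i j. c * A$i$j)"
  by (simp add: matrix_matrix_mult_def mat_def vec_eq_iff if_distrib if_distribR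
      cong: if_cong)

lemma mat_mult_right: "(A::'a::comm_ring_1^'n^'m) ** mat c = (\<chi> i j. c * A$i$j)"
  by (simp add: matrix_matrix_mult_def mat_def vec_eq_iff if_distrib if_distribR
      mult.commute cong: if_cong)

lemma mat_mult_commute: "(A::'a::comm_ring_1^'n^'n) ** mat c = mat c ** A"
  by (simp add: mat_mult_left mat_mult_right)

lemma mat_mult_mat: "mat c ** mat d = (mat (c * d) :: 'a::comm_ring_1^'n^'n)"
  by (subst mat_mult_left) (simp add: vec_eq_iff mat_def)

lemma mat_mult_vector: "(mat c :: 'a::comm_ring_1^'n^'n) *v x = c *s x"
  by (simp add: matrix_vector_mult_def mat_def vec_eq_iff if_distrib if_distribR
      cong: if_cong)

lemma scaled_matrix_vector_mult: "((mat c :: 'a::comm_ring_1^'n^'n) ** A) *v x = c *s (A *v x)"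
  by (metis mat_mult_vector matrix_vector_mul_assoc)

lemma mat_mult_scaled: "mat d ** (mat c ** A) = mat (d * c) ** (A::'a::comm_ring_1^'m^'n)"
  by (simp add: matrix_mul_assoc mat_mult_mat)

lemma scaled_mult_scaled:
  "(mat c ** A) ** (mat d ** B) = mat (c * d) ** ((A::'a::comm_ring_1^'n^'n) ** B)"
proof -
  have "(mat c ** A) ** (mat d ** B) = mat c ** ((A ** mat d) ** B)"
    by (simp add: matrix_mul_assoc)
  also have "\<dots> = mat c ** (mat d ** (A ** B))"
    by (simp only: mat_mult_commute[of A d] matrix_mul_assoc)
  finally show ?thesis by (simp only: mat_mult_scaled)
qed

lemma
  assumes "invertible (A::'a::field^'n^'n)"
  shows matrix_inv_left: "matrix_inv A ** A = mat 1"
    and matrix_inv_right: "A ** matrix_inv A = mat 1"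
proof -
  have "\<exists>A'. A ** A' = mat 1 \<and> A' ** A = mat 1" using assms by (simp add: invertible_def)
  then have "A ** matrix_inv A = mat 1 \<and> matrix_inv A ** A = mat 1"
    unfolding matrix_inv_def by (rule someI_ex)
  then show "matrix_inv A ** A = mat 1" "A ** matrix_inv A = mat 1" by auto
qed

lemma invertible_matrix_inv: "invertible (A::'a::field^'n^'n) \<Longrightarrow> invertible (matrix_inv A)"
  unfolding invertible_def[of "matrix_inv A"]
  by (intro exI[of _ A]) (simp add: matrix_inv_left matrix_inv_right)

lemma invertible_scaled:
  assumes "invertible (A::'a::field^'n^'n)" and "c \<noteq> 0"
  shows "invertible (mat c ** A)"
proof -
  have "(mat (1/c) ** matrix_inv A) ** (mat c ** A) = mat 1"
    using assms by (simp add: scaled_mult_scaled matrix_inv_left)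
  then show ?thesis unfolding invertible_left_inverse by blast
qed

definition pgl_class :: "'a::{field,finite}^3^3 \<Rightarrow> ('a^3^3) set" where
  "pgl_class A = {mat c ** A | c. c \<noteq> 0}"

definition proj_point :: "'a::{field,finite}^3 \<Rightarrow> ('a^3) set" where
  "proj_point v = {c *s v | c. c \<noteq> 0}"

lemma scaled_in_pgl_class: "c \<noteq> 0 \<Longrightarrow> mat c ** A \<in> pgl_class A"
  unfolding pgl_class_def by blast

lemma smult_in_proj_point: "c \<noteq> 0 \<Longrightarrow> c *s v \<in> proj_point v"
  unfolding proj_point_def by blast

lemma PGL3_eq_image: "PGL3 = pgl_class ` {A. invertible A}"
  unfolding PGL3_def pgl_class_def by auto

lemma PG2_points_eq_image: "PG2_points = proj_point ` {v. v \<noteq> 0}"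
  unfolding PG2_points_def proj_point_def by auto

lemma pgl_class_in_PGL3: "invertible A \<Longrightarrow> pgl_class A \<in> PGL3"
  unfolding PGL3_eq_image by auto

lemma PGL3_obtain_class:
  assumes "g \<in> PGL3"
  obtains A where "invertible A" "g = pgl_class A"
  using assms unfolding PGL3_eq_image by auto

lemma pgl_class_eq_iff: "pgl_class A = pgl_class B \<longleftrightarrow> (\<exists>c. c \<noteq> 0 \<and> B = mat c ** A)"
proof
  assume "pgl_class A = pgl_class B"
  moreover have "B \<in> pgl_class B" using scaled_in_pgl_class[of 1 B] by simp
  ultimately show "\<exists>c. c \<noteq> 0 \<and> B = mat c ** A" unfolding pgl_class_def by blast
next
  assume "\<exists>c. c \<noteq> 0 \<and> B = mat c ** A"
  then obtain c where c: "c \<noteq> 0" "B = mat c ** A" by blast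
  show "pgl_class A = pgl_class B"
  proof (intro set_eqI iffI)
    fix X assume "X \<in> pgl_class A"
    then obtain e where "e \<noteq> 0" "X = mat e ** A" unfolding pgl_class_def by blast
    then have "X = mat (e / c) ** B" using c by (simp add: mat_mult_scaled)
    then show "X \<in> pgl_class B" using \<open>e \<noteq> 0\<close> c(1) by (simp add: scaled_in_pgl_class)
  next
    fix X assume "X \<in> pgl_class B"
    then obtain e where "e \<noteq> 0" "X = mat e ** B" unfolding pgl_class_def by blast
    then have "X = mat (e * c) ** A" using c by (simp add: mat_mult_scaled)
    then show "X \<in> pgl_class A" using \<open>e \<noteq> 0\<close> c(1) by (simp add: scaled_in_pgl_class)
  qed
qed

lemma proj_point_eq_iff:
  assumes "x \<noteq> 0"
  shows "proj_point x = proj_point y \<longleftrightarrow> (\<exists>c. c \<noteq> 0 \<and> y = c *s x)"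
proof
  assume "proj_point x = proj_point y"
  moreover have "y \<in> proj_point y" using smult_in_proj_point[of 1 y] by simp
  ultimately show "\<exists>c. c \<noteq> 0 \<and> y = c *s x" unfolding proj_point_def by blast
next
  assume "\<exists>c. c \<noteq> 0 \<and> y = c *s x"
  then obtain c where c: "c \<noteq> 0" "y = c *s x" by blast
  show "proj_point x = proj_point y"
  proof (intro set_eqI iffI)
    fix z assume "z \<in> proj_point x"
    then obtain e where "e \<noteq> 0" "z = e *s x" unfolding proj_point_def by blast
    then have "z = (e / c) *s y" using c by simp
    then show "z \<in> proj_point y" using \<open>e \<noteq> 0\<close> c(1) by (simp add: smult_in_proj_point)
  next
    fix z assume "z \<in> proj_point y"
    then obtain e where "e \<noteq> 0" "z = e *s y" unfolding proj_point_def by blast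
    then have "z = (e * c) *s x" using c by simp
    then show "z \<in> proj_point x" using \<open>e \<noteq> 0\<close> c(1) by (simp add: smult_in_proj_point)
  qed
qed

lemma pgl_mult_class: "pgl_mult (pgl_class A) (pgl_class B) = pgl_class (A ** B)"
proof (rule set_eqI)
  fix X
  show "X \<in> pgl_mult (pgl_class A) (pgl_class B) \<longleftrightarrow> X \<in> pgl_class (A ** B)"
  proof
    assume "X \<in> pgl_mult (pgl_class A) (pgl_class B)"
    then obtain c d where "c \<noteq> 0" "d \<noteq> 0" "X = (mat c ** A) ** (mat d ** B)"
      unfolding pgl_mult_def pgl_class_def by auto
    then show "X \<in> pgl_class (A ** B)"
      by (simp add: scaled_mult_scaled scaled_in_pgl_class)
  next
    assume "X \<in> pgl_class (A ** B)"
    then obtain c where "c \<noteq> 0" "X = (mat c ** A) ** (mat 1 ** B)"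
      unfolding pgl_class_def by (auto simp: matrix_mul_assoc)
    then show "X \<in> pgl_mult (pgl_class A) (pgl_class B)"
      unfolding pgl_mult_def using scaled_in_pgl_class[of c A] scaled_in_pgl_class[of 1 B] by auto
  qed
qed

lemma pgl_inv_class:
  assumes "invertible A"
  shows "pgl_inv (pgl_class A) = pgl_class (matrix_inv A)"
proof (rule set_eqI)
  fix X
  show "X \<in> pgl_inv (pgl_class A) \<longleftrightarrow> X \<in> pgl_class (matrix_inv A)"
  proof
    assume "X \<in> pgl_inv (pgl_class A)"
    then obtain c where c: "c \<noteq> 0" "X ** (mat c ** A) = mat 1"
      unfolding pgl_inv_def pgl_class_def by auto
    have "(mat c ** A) ** (mat (1/c) ** matrix_inv A) = mat 1"
      using c assms by (simp add: scaled_mult_scaled matrix_inv_right)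
    then have "X = mat (1/c) ** matrix_inv A"
      by (metis c(2) matrix_mul_assoc matrix_mul_lid matrix_mul_rid)
    then show "X \<in> pgl_class (matrix_inv A)" using c by (simp add: scaled_in_pgl_class)
  next
    assume "X \<in> pgl_class (matrix_inv A)"
    then obtain c where c: "c \<noteq> 0" "X = mat c ** matrix_inv A" unfolding pgl_class_def by auto
    have "X ** (mat (1/c) ** A) = mat 1"
      using c assms by (simp add: scaled_mult_scaled matrix_inv_left)
    moreover have "mat (1/c) ** A \<in> pgl_class A" using c by (simp add: scaled_in_pgl_class)
    ultimately show "X \<in> pgl_inv (pgl_class A)" unfolding pgl_inv_def by blast
  qed
qed

lemma pgl_act_class: "pgl_act (pgl_class A) (proj_point v) = proj_point (A *v v)"
proof (rule set_eqI)
  fix x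
  show "x \<in> pgl_act (pgl_class A) (proj_point v) \<longleftrightarrow> x \<in> proj_point (A *v v)"
  proof
    assume "x \<in> pgl_act (pgl_class A) (proj_point v)"
    then obtain c d where "c \<noteq> 0" "d \<noteq> 0" "x = (mat c ** A) *v (d *s v)"
      unfolding pgl_act_def pgl_class_def proj_point_def by auto
    then show "x \<in> proj_point (A *v v)"
      by (simp add: scaled_matrix_vector_mult vector_scalar_commute smult_in_proj_point)
  next
    assume "x \<in> proj_point (A *v v)"
    then obtain c where c: "c \<noteq> 0" "x = (mat c ** A) *v (1 *s v)"
      unfolding proj_point_def by (auto simp: scaled_matrix_vector_mult)
    then show "x \<in> pgl_act (pgl_class A) (proj_point v)"
      unfolding pgl_act_def using scaled_in_pgl_class[OF c(1)] smult_in_proj_point[of 1 v] by auto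
  qed
qed

definition has_eigenvector :: "'a::field^'n^'n \<Rightarrow> bool" where
  "has_eigenvector A \<longleftrightarrow> (\<exists>v l. v \<noteq> 0 \<and> A *v v = l *s v)"

lemma has_eigenvector_iff_fixes_point:
  assumes "invertible (A::'a::{field,finite}^3^3)"
  shows "has_eigenvector A \<longleftrightarrow> (\<exists>v. v \<noteq> 0 \<and> proj_point (A *v v) = proj_point v)"
proof
  assume "has_eigenvector A"
  then obtain v l where v: "v \<noteq> 0" "A *v v = l *s v" unfolding has_eigenvector_def by auto
  have "l \<noteq> 0"
  proof
    assume "l = 0"
    then have "A *v v = A *v 0" using v by simp
    then show False using v injD[OF inj_matrix_vector_mult[OF assms]] by blast
  qed
  then show "\<exists>v. v \<noteq> 0 \<and> proj_point (A *v v) = proj_point v"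
    using proj_point_eq_iff[OF v(1)] v by metis
next
  assume "\<exists>v. v \<noteq> 0 \<and> proj_point (A *v v) = proj_point v"
  then show "has_eigenvector A"
    unfolding has_eigenvector_def using proj_point_eq_iff by metis
qed

lemma derangement_class_iff:
  assumes "invertible (A::'a::{field,finite}^3^3)"
  shows "derangement (pgl_class A) \<longleftrightarrow> \<not> has_eigenvector A"
  using assms pgl_class_in_PGL3[OF assms]
  unfolding derangement_def PG2_points_eq_image has_eigenvector_iff_fixes_point[OF assms]
  by (simp add: pgl_act_class) blast

lemma derangement_adj_class_iff:
  assumes "invertible A" and "invertible B"
  shows "derangement_adj (pgl_class A) (pgl_class B) \<longleftrightarrow> \<not> has_eigenvector (A ** matrix_inv B)"
  unfolding derangement_adj_def pgl_inv_class[OF assms(2)] pgl_mult_class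
  using assms by (simp add: derangement_class_iff invertible_mult invertible_matrix_inv)

lemma has_eigenvector_conj_scaled:
  assumes A: "invertible (A::'a::field^'n^'n)" and "mu \<noteq> 0"
    and "has_eigenvector (mat mu ** (A ** Z ** matrix_inv A))"
  shows "has_eigenvector Z"
proof -
  obtain v l where v: "v \<noteq> 0" "(mat mu ** (A ** Z ** matrix_inv A)) *v v = l *s v"
    using assms(3) unfolding has_eigenvector_def by blast
  define u where "u = matrix_inv A *v v"
  have vu: "v = A *v u"
    unfolding u_def by (simp add: matrix_vector_mul_assoc matrix_inv_right[OF A])
  have "matrix_inv A *v (A *v u) = u"
    by (simp add: matrix_vector_mul_assoc matrix_inv_left[OF A])
  then have "A *v (mu *s (Z *v u)) = A *v (l *s u)"
    using v(2) unfolding vu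
    by (simp add: mat_mult_vector matrix_vector_mul_assoc[symmetric] vector_scalar_commute)
  then have "mu *s (Z *v u) = l *s u" by (rule injD[OF inj_matrix_vector_mult[OF A]])
  then have "(1 / mu) *s (mu *s (Z *v u)) = (1 / mu) *s (l *s u)" by simp
  then have "Z *v u = (l / mu) *s u" using \<open>mu \<noteq> 0\<close> by simp
  moreover have "u \<noteq> 0" using v vu by auto
  ultimately show ?thesis unfolding has_eigenvector_def by blast
qed

subsection \<open>Linear maps annihilated by a cubic without roots\<close>

lemma exists_rootless_monic_cubic:
  "\<exists>r0 r1 r2::'a::{field,finite}. \<forall>t. t^3 \<noteq> r2 * t^2 + r1 * t + r0"
proof -
  define F :: "'a \<times> 'a \<times> 'a \<Rightarrow> 'a \<times> 'a \<times> 'a" where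
    "F = (\<lambda>(t, r1, r2). (t^3 - r2 * t^2 - r1 * t, r1, r2))"
  \<comment> \<open>F is not injective, as t^3 - t vanishes at 0 and 1, so it is not surjective either.\<close>
  have "F (0, 1, 0) = F (1, 1, 0)" unfolding F_def by simp
  then have "\<not> inj F" unfolding inj_def by force
  then have "\<not> surj F" using finite_UNIV_surj_inj[of F] by auto
  then obtain r0 r1 r2 where r: "(r0, r1, r2) \<notin> range F" by auto
  have "t^3 \<noteq> r2 * t^2 + r1 * t + r0" for t
  proof
    assume "t^3 = r2 * t^2 + r1 * t + r0"
    then have "F (t, r1, r2) = (r0, r1, r2)" unfolding F_def by (simp add: algebra_simps)
    then show False using r by (metis rangeI)
  qed
  then show ?thesis by blast
qed

locale cubic_relation =
  fixes f :: "'a::field^'n \<Rightarrow> 'a^'n" and r0 r1 r2 :: 'a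
  assumes add: "f (x + y) = f x + f y"
    and scale: "f (c *s x) = c *s f x"
    and cubic: "f (f (f x)) = r0 *s x + r1 *s f x + r2 *s f (f x)"
    and rootless: "t^3 \<noteq> r2 * t^2 + r1 * t + r0"
begin

lemma no_eigenvector: "x \<noteq> 0 \<Longrightarrow> f x \<noteq> m *s x"
proof
  assume "x \<noteq> 0" and e: "f x = m *s x"
  then have "f (f (f x)) = (m * m * m) *s x" by (simp add: scale)
  then have "(m * m * m - (r0 + r1 * m + r2 * (m * m))) *s x = 0"
    using cubic[of x] e by (simp add: scale vec_eq_iff algebra_simps)
  then have "m * m * m - (r0 + r1 * m + r2 * (m * m)) = 0"
    using \<open>x \<noteq> 0\<close> by (simp only: vector_mul_eq_0) simp
  then have "m^3 = r2 * m^2 + r1 * m + r0"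
    by (simp add: power3_eq_cube power2_eq_square algebra_simps)
  then show False using rootless by blast
qed

lemma independent_pair:
  assumes "x \<noteq> 0" and "a *s x + b *s f x = 0"
  shows "a = 0 \<and> b = 0"
proof (cases "b = 0")
  case True
  then show ?thesis using assms by simp
next
  case False
  have "f x = (- a / b) *s x"
    using assms(2) False by (simp add: vec_eq_iff field_simps) (metis add_eq_0_iff)
  then show ?thesis using no_eigenvector[OF assms(1)] by blast
qed

lemma independent_triple:
  assumes "x \<noteq> 0" and e: "a *s x + b *s f x + c *s f (f x) = 0"
  shows "a = 0 \<and> b = 0 \<and> c = 0"
proof (cases "c = 0")
  case True
  then show ?thesis using independent_pair[OF assms(1), of a b] e by simp
next
  case False
  define al where "al = - a / c"
  define be where "be = - b / c"
  have ff: "f (f x) = al *s x + be *s f x"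
    using e False unfolding al_def be_def
    by (simp add: vec_eq_iff field_simps) (metis add_eq_0_iff)
  \<comment> \<open>Then f restricts to the plane spanned by x and f x, where it has the characteristic
     polynomial t^2 - be t - al; comparing with the cubic relation, r2 - be is a root.\<close>
  have "f (f (f x)) = al *s f x + be *s f (f x)"
    using ff by (simp add: add scale)
  then have "f (f (f x)) = (be * al) *s x + (al + be * be) *s f x"
    unfolding ff by (simp add: vec_eq_iff algebra_simps)
  moreover have "f (f (f x)) = (r0 + r2 * al) *s x + (r1 + r2 * be) *s f x"
    using cubic[of x] unfolding ff by (simp add: vec_eq_iff algebra_simps)
  ultimately have "(be * al - r0 - r2 * al) *s x + (al + be * be - r1 - r2 * be) *s f x = 0"
    by (simp add: vec_eq_iff algebra_simps)
  then have "be * al - r0 - r2 * al = 0" "al + be * be - r1 - r2 * be = 0"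
    using independent_pair[OF assms(1)] by blast+
  then have r0_eq: "r0 = be * al - r2 * al" and r1_eq: "r1 = al + be * be - r2 * be"
    by (simp_all add: algebra_simps)
  have "(r2 - be)^3 = r2 * (r2 - be)^2 + r1 * (r2 - be) + r0"
    unfolding r0_eq r1_eq by (simp add: power3_eq_cube power2_eq_square algebra_simps)
  then show ?thesis using rootless by blast
qed

end

subsection \<open>A Singer subgroup\<close>

definition companion3 :: "'a::field \<Rightarrow> 'a \<Rightarrow> 'a \<Rightarrow> 'a^3^3" where
  "companion3 r0 r1 r2 = (\<chi> i j. if i = 1 then (if j = 3 then r0 else 0)
     else if i = 2 then (if j = 1 then 1 else if j = 3 then r1 else 0)
     else (if j = 2 then 1 else if j = 3 then r2 else 0))"

lemma companion3_vector: "companion3 r0 r1 r2 *v x =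
   (\<chi> i. if i = 1 then r0 * x$3 else if i = 2 then x$1 + r1 * x$3 else x$2 + r2 * x$3)"
  unfolding vec_eq_iff forall_3 by (simp add: matrix_vector_mult_def sum_3 companion3_def)

lemma companion3_cubic:
  "companion3 r0 r1 r2 *v (companion3 r0 r1 r2 *v (companion3 r0 r1 r2 *v x))
     = r0 *s x + r1 *s (companion3 r0 r1 r2 *v x)
       + r2 *s (companion3 r0 r1 r2 *v (companion3 r0 r1 r2 *v x))"
  unfolding companion3_vector vec_eq_iff forall_3 by (simp add: algebra_simps)

locale rootless_cubic =
  fixes r0 r1 r2 :: "'a::{field,finite}"
  assumes rootless: "t^3 \<noteq> r2 * t^2 + r1 * t + r0"
begin

abbreviation M :: "'a^3^3" where "M \<equiv> companion3 r0 r1 r2"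

sublocale cubic_relation "(*v) M" r0 r1 r2
  by unfold_locales
    (simp_all add: matrix_vector_right_distrib vector_scalar_commute companion3_cubic rootless)

text \<open>M is the companion matrix of an irreducible cubic, so GF(q)[M] \<cong> GF(q^3); singer w is
  the element of this field that maps the first basis vector to w.\<close>

definition singer :: "'a^3 \<Rightarrow> 'a^3^3" where
  "singer w = mat (w$1) + mat (w$2) ** M + mat (w$3) ** (M ** M)"

lemma singer_vector: "singer w *v x = w$1 *s x + w$2 *s (M *v x) + w$3 *s (M *v (M *v x))"
  unfolding singer_def
  by (simp add: matrix_vector_mult_add_rdistrib mat_mult_vector scaled_matrix_vector_mult
      matrix_vector_mul_assoc)

lemma singer_axis: "singer w *v axis 1 1 = w"
  unfolding singer_vector companion3_vector axis_def vec_eq_iff forall_3 by simp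

lemma singer_scaled: "singer (c *s w) = mat c ** singer w"
  unfolding matrix_eq by (simp add: scaled_matrix_vector_mult singer_vector vec_eq_iff algebra_simps)

lemma singer_diff: "singer w' *v x - l *s (singer w *v x) = singer (w' - l *s w) *v x"
  by (simp add: singer_vector vec_eq_iff algebra_simps)

lemma singer_kernel:
  assumes "w \<noteq> 0" and "singer w *v x = 0"
  shows "x = 0"
proof (rule ccontr)
  assume "x \<noteq> 0"
  then have "w$1 = 0 \<and> w$2 = 0 \<and> w$3 = 0"
    using independent_triple[of x "w$1" "w$2" "w$3"] assms(2) unfolding singer_vector by simp
  then show False using assms(1) unfolding vec_eq_iff forall_3 by simp
qed

lemma invertible_singer: "w \<noteq> 0 \<Longrightarrow> invertible (singer w)"
  unfolding invertible_left_inverse matrix_left_invertible_ker using singer_kernel by blast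

lemma singer_eigenvector_scaled:
  assumes "w \<noteq> 0" and "w' \<noteq> 0"
    and "has_eigenvector (matrix_inv (singer w) ** singer w')"
  obtains l where "l \<noteq> 0" "singer w' = mat l ** singer w"
proof -
  obtain u l where u: "u \<noteq> 0" "(matrix_inv (singer w) ** singer w') *v u = l *s u"
    using assms(3) unfolding has_eigenvector_def by blast
  have "singer w' *v u = singer w *v ((matrix_inv (singer w) ** singer w') *v u)"
    by (simp add: matrix_vector_mul_assoc matrix_mul_assoc matrix_inv_right invertible_singer assms)
  then have "singer w' *v u = l *s (singer w *v u)"
    using u by (simp add: vector_scalar_commute)
  then have "singer (w' - l *s w) *v u = 0" unfolding singer_diff[symmetric] by simp
  then have "w' - l *s w = 0" using singer_kernel u(1) by blast
  then have "w' = l *s w" by simp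
  moreover from this have "l \<noteq> 0" using assms(2) by auto
  ultimately show thesis using that by (simp add: singer_scaled)
qed

definition singer_group :: "('a^3^3) set set" where
  "singer_group = (\<lambda>w. pgl_class (singer w)) ` {w. w \<noteq> 0}"

end

subsection \<open>The stabiliser of a point\<close>

definition point_stabiliser :: "('a::{field,finite}^3^3) set set" where
  "point_stabiliser = {g \<in> PGL3. pgl_act g (proj_point (axis 1 1)) = proj_point (axis 1 1)}"

lemma axis_nonzero: "axis i (1::'a::zero_neq_one) \<noteq> 0"
  by (metis axis_nth zero_index zero_neq_one)

lemma pgl_class_fixes_axis_iff:
  "pgl_act (pgl_class A) (proj_point (axis 1 1)) = proj_point (axis 1 1)
     \<longleftrightarrow> (\<exists>a. a \<noteq> 0 \<and> A *v axis 1 1 = a *s axis 1 1)"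
  unfolding pgl_act_class using proj_point_eq_iff[OF axis_nonzero, of 1 "A *v axis 1 1"] by metis

lemma pgl_class_in_point_stabiliser:
  "invertible A \<Longrightarrow> A *v axis 1 1 = axis 1 1 \<Longrightarrow> pgl_class A \<in> point_stabiliser"
  unfolding point_stabiliser_def
  by (simp add: pgl_class_in_PGL3 pgl_class_fixes_axis_iff) (metis one_neq_zero vector_smult_lid)

lemma point_stabiliser_obtain_class:
  assumes "g \<in> point_stabiliser"
  obtains A a where "invertible A" "g = pgl_class A" "a \<noteq> 0" "A *v axis 1 1 = a *s axis 1 1"
proof -
  have "g \<in> PGL3" and fixes_axis: "pgl_act g (proj_point (axis 1 1)) = proj_point (axis 1 1)"
    using assms unfolding point_stabiliser_def by blast+
  obtain A where "invertible A" "g = pgl_class A"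
    using \<open>g \<in> PGL3\<close> by (rule PGL3_obtain_class)
  moreover from this(2) have "\<exists>a. a \<noteq> 0 \<and> A *v axis 1 1 = a *s axis 1 1"
    using fixes_axis by (simp add: pgl_class_fixes_axis_iff)
  ultimately show thesis using that by blast
qed

lemma independent_set_point_stabiliser:
  "independent_set (point_stabiliser :: ('a::{field,finite}^3^3) set set)"
  unfolding independent_set_def
proof (intro conjI ballI)
  show "point_stabiliser \<subseteq> PGL3" unfolding point_stabiliser_def by auto
next
  fix g h :: "('a^3^3) set" assume "g \<in> point_stabiliser" and "h \<in> point_stabiliser"
  then obtain A B a b where AB: "invertible A" "g = pgl_class A" "invertible B" "h = pgl_class B"
    and ab: "a \<noteq> 0" "A *v axis 1 1 = a *s axis 1 1" "b \<noteq> 0" "B *v axis 1 1 = b *s axis 1 1"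
    by (metis point_stabiliser_obtain_class)
  have "(1 / b) *s axis 1 1 = (1 / b) *s (matrix_inv B *v (B *v axis 1 1))"
    by (simp add: matrix_vector_mul_assoc matrix_inv_left[OF AB(3)])
  also have "\<dots> = matrix_inv B *v axis 1 1"
    using ab(3,4) by (simp add: vector_scalar_commute)
  finally have "matrix_inv B *v axis 1 1 = (1 / b) *s axis 1 1" by (rule sym)
  then have "(A ** matrix_inv B) *v axis 1 1 = (a / b) *s axis 1 1"
    using ab(2) by (simp add: matrix_vector_mul_assoc[symmetric] vector_scalar_commute)
  then have "has_eigenvector (A ** matrix_inv B)"
    unfolding has_eigenvector_def using axis_nonzero by blast
  then show "\<not> derangement_adj g h" using derangement_adj_class_iff[OF AB(1,3)] AB(2,4) by simp
qed

definition GL2 :: "('a::field \<times> 'a \<times> 'a \<times> 'a) set" where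
  "GL2 = {(a, b, c, d). a * d - b * c \<noteq> 0}"

lemma card_nonzero: "card {x::'a::{field,finite}. x \<noteq> 0} = CARD('a) - 1"
proof -
  have "{x::'a. x \<noteq> 0} = UNIV - {0}" by auto
  then show ?thesis by (simp add: card_Diff_subset)
qed

lemma card_GL2:
  defines "q \<equiv> CARD('a::{field,finite})"
  shows "card (GL2 :: ('a \<times> 'a \<times> 'a \<times> 'a) set) = (q^2 - 1) * (q^2 - q)"
proof -
  define N :: "'a set" where "N = {x. x \<noteq> 0}"
  define f0 :: "'a \<times> 'a \<times> 'a \<Rightarrow> 'a \<times> 'a \<times> 'a \<times> 'a" where "f0 = (\<lambda>(b, c, d). (0, b, c, d))"
  \<comment> \<open>For a \<noteq> 0 the determinant condition reads e \<noteq> 0 for e = d - b c / a.\<close>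
  define f1 :: "'a \<times> 'a \<times> 'a \<times> 'a \<Rightarrow> 'a \<times> 'a \<times> 'a \<times> 'a" where
    "f1 = (\<lambda>(a, b, c, e). (a, b, c, e + b * c / a))"
  have GL2_split: "GL2 = f0 ` (N \<times> N \<times> UNIV) \<union> f1 ` (N \<times> UNIV \<times> UNIV \<times> N)"
  proof (rule set_eqI)
    fix z :: "'a \<times> 'a \<times> 'a \<times> 'a"
    obtain a b c d where z: "z = (a, b, c, d)" by (cases z) auto
    show "z \<in> GL2 \<longleftrightarrow> z \<in> f0 ` (N \<times> N \<times> UNIV) \<union> f1 ` (N \<times> UNIV \<times> UNIV \<times> N)"
    proof
      assume "z \<in> GL2"
      then have det: "a * d - b * c \<noteq> 0" unfolding GL2_def z by simp
      show "z \<in> f0 ` (N \<times> N \<times> UNIV) \<union> f1 ` (N \<times> UNIV \<times> UNIV \<times> N)"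
      proof (cases "a = 0")
        case True
        then have "z = f0 (b, c, d)" "(b, c, d) \<in> N \<times> N \<times> UNIV"
          using det unfolding z f0_def N_def by auto
        then show ?thesis by blast
      next
        case False
        then have "z = f1 (a, b, c, d - b * c / a)" "(a, b, c, d - b * c / a) \<in> N \<times> UNIV \<times> UNIV \<times> N"
          using det unfolding z f1_def N_def by (auto simp: field_simps)
        then show ?thesis by blast
      qed
    qed (auto simp: GL2_def f0_def f1_def N_def z field_simps)
  qed
  have "f0 ` (N \<times> N \<times> UNIV) \<inter> f1 ` (N \<times> UNIV \<times> UNIV \<times> N) = {}"
    unfolding f0_def f1_def N_def by auto
  then have "card (GL2 :: ('a \<times> 'a \<times> 'a \<times> 'a) set) = card (f0 ` (N \<times> N \<times> UNIV)) + card (f1 ` (N \<times> UNIV \<times> UNIV \<times> N))"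
    unfolding GL2_split by (intro card_Un_disjoint) simp_all
  moreover have "card (f0 ` (N \<times> N \<times> UNIV)) = (q - 1) * (q - 1) * q"
  proof -
    have "inj_on f0 (N \<times> N \<times> UNIV)" unfolding f0_def by (auto simp: inj_on_def)
    then show ?thesis by (simp add: card_image card_cartesian_product N_def card_nonzero q_def)
  qed
  moreover have "card (f1 ` (N \<times> UNIV \<times> UNIV \<times> N)) = (q - 1) * (q * (q * (q - 1)))"
  proof -
    have "inj_on f1 (N \<times> UNIV \<times> UNIV \<times> N)" unfolding f1_def N_def by (auto simp: inj_on_def)
    then show ?thesis by (simp add: card_image card_cartesian_product N_def card_nonzero q_def)
  qed
  moreover obtain k where "q = Suc k" unfolding q_def using not0_implies_Suc by fastforce
  ultimately show ?thesis by (simp add: algebra_simps power2_eq_square)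
qed

definition stabiliser_matrix :: "'a::field \<times> 'a \<times> 'a \<times> 'a \<times> 'a \<times> 'a \<Rightarrow> 'a^3^3" where
  "stabiliser_matrix = (\<lambda>(x, y, a, b, c, d). (\<chi> i j. if i = 1 then (if j = 1 then 1 else if j = 2 then x else y)
      else if i = 2 then (if j = 1 then 0 else if j = 2 then a else b)
      else (if j = 1 then 0 else if j = 2 then c else d)))"

lemma det_stabiliser_matrix: "det (stabiliser_matrix (x, y, a, b, c, d)) = a * d - b * c"
  unfolding det_3 stabiliser_matrix_def by (simp add: algebra_simps)

lemma inj_stabiliser_matrix: "inj stabiliser_matrix"
proof (rule injI)
  fix z z' :: "'a \<times> 'a \<times> 'a \<times> 'a \<times> 'a \<times> 'a"
  assume e: "stabiliser_matrix z = stabiliser_matrix z'"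
  obtain x y a b c d x' y' a' b' c' d'
    where z: "z = (x, y, a, b, c, d)" "z' = (x', y', a', b', c', d')" by (cases z, cases z') auto
  show "z = z'"
    using e unfolding z stabiliser_matrix_def vec_eq_iff forall_3 by simp
qed

lemma matrices_fixing_axis_eq:
  "{A::'a::field^3^3. invertible A \<and> A *v axis 1 1 = axis 1 1}
     = stabiliser_matrix ` (UNIV \<times> UNIV \<times> GL2)"
proof (rule set_eqI)
  fix A :: "'a^3^3"
  show "A \<in> {A. invertible A \<and> A *v axis 1 1 = axis 1 1}
      \<longleftrightarrow> A \<in> stabiliser_matrix ` (UNIV \<times> UNIV \<times> GL2)"
  proof
    assume "A \<in> {A. invertible A \<and> A *v axis 1 1 = axis 1 1}"
    then have "det A \<noteq> 0" and col: "A *v axis 1 1 = axis 1 1"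
      by (simp_all add: invertible_det_nz)
    from col have "A$1$1 = 1" "A$2$1 = 0" "A$3$1 = 0"
      by (simp_all add: axis_def vec_eq_iff forall_3 matrix_vector_mult_def sum_3)
    then have A: "A = stabiliser_matrix (A$1$2, A$1$3, A$2$2, A$2$3, A$3$2, A$3$3)"
      unfolding stabiliser_matrix_def vec_eq_iff forall_3 by simp
    then have "A$2$2 * A$3$3 - A$2$3 * A$3$2 \<noteq> 0"
      using \<open>det A \<noteq> 0\<close> det_stabiliser_matrix by metis
    then show "A \<in> stabiliser_matrix ` (UNIV \<times> UNIV \<times> GL2)"
      by (intro image_eqI[where f = stabiliser_matrix, OF A]) (simp add: GL2_def)
  next
    assume "A \<in> stabiliser_matrix ` (UNIV \<times> UNIV \<times> GL2)"
    then obtain x y a b c d where A: "A = stabiliser_matrix (x, y, a, b, c, d)"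
      and "a * d - b * c \<noteq> 0" unfolding GL2_def by auto
    then have "det A \<noteq> 0" by (simp add: det_stabiliser_matrix)
    moreover have "A *v axis 1 1 = axis 1 1"
      unfolding A by (simp add: stabiliser_matrix_def axis_def vec_eq_iff forall_3
          matrix_vector_mult_def sum_3)
    ultimately show "A \<in> {A. invertible A \<and> A *v axis 1 1 = axis 1 1}"
      by (simp add: invertible_det_nz)
  qed
qed

lemma card_point_stabiliser:
  defines "q \<equiv> CARD('a::{field,finite})"
  shows "card (point_stabiliser :: ('a^3^3) set set) = q^3 * (q^2 - 1) * (q - 1)"
proof -
  let ?U = "{A::'a^3^3. invertible A \<and> A *v axis 1 1 = axis 1 1}"
  have stab_eq: "point_stabiliser = pgl_class ` ?U"
  proof
    show "pgl_class ` ?U \<subseteq> point_stabiliser"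
      by (auto intro: pgl_class_in_point_stabiliser)
    show "point_stabiliser \<subseteq> pgl_class ` ?U"
    proof
      fix g :: "('a^3^3) set" assume "g \<in> point_stabiliser"
      then obtain A a where A: "invertible A" "g = pgl_class A" "a \<noteq> 0"
        "A *v axis 1 1 = a *s axis 1 1"
        by (rule point_stabiliser_obtain_class)
      have "mat (1/a) ** A \<in> ?U"
        using A by (simp add: invertible_scaled scaled_matrix_vector_mult)
      moreover have "g = pgl_class (mat (1/a) ** A)"
        unfolding A(2) pgl_class_eq_iff using A(3) by (intro exI[of _ "1/a"]) simp
      ultimately show "g \<in> pgl_class ` ?U" by blast
    qed
  qed
  have "inj_on pgl_class ?U"
  proof (rule inj_onI)
    fix A B assume "A \<in> ?U" "B \<in> ?U" "pgl_class A = pgl_class B"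
    then obtain c where c: "B = mat c ** A" unfolding pgl_class_eq_iff by blast
    then have "c *s axis 1 1 = B *v axis 1 1"
      using \<open>A \<in> ?U\<close> by (simp add: scaled_matrix_vector_mult)
    also have "\<dots> = axis 1 1" using \<open>B \<in> ?U\<close> by simp
    finally have "c = 1" by (metis axis_nth vector_smult_component mult.right_neutral)
    then show "A = B" using c by simp
  qed
  then have "card (point_stabiliser :: ('a^3^3) set set) = card ?U"
    unfolding stab_eq by (rule card_image)
  also have "\<dots> = q * q * card (GL2 :: ('a \<times> 'a \<times> 'a \<times> 'a) set)"
    unfolding matrices_fixing_axis_eq q_def
    by (simp add: card_image inj_on_subset[OF inj_stabiliser_matrix] card_cartesian_product)
  also have "\<dots> = q^3 * (q^2 - 1) * (q - 1)"
  proof -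
    have "q^2 - q = q * (q - 1)" by (simp add: power2_eq_square diff_mult_distrib2)
    then show ?thesis unfolding card_GL2 q_def[symmetric] by (simp add: power3_eq_cube mult_ac)
  qed
  finally show ?thesis .
qed

subsection \<open>Double counting\<close>

lemma card_le_card_by_injection_and_covering:
  assumes "finite C" and "C \<noteq> {}" and "finite T"
    and "inj_on f (C \<times> S)" and "f ` (C \<times> S) \<subseteq> G" and "G \<subseteq> f ` (C \<times> T)"
  shows "card S \<le> card T"
proof -
  have "card C * card S = card (f ` (C \<times> S))"
    using assms(4) by (simp add: card_image card_cartesian_product)
  also have "\<dots> \<le> card G"
    using assms(1,3,5,6) by (intro card_mono) (auto intro: finite_subset)
  also have "\<dots> \<le> card (f ` (C \<times> T))"
    using assms(1,3,6) by (simp add: card_mono)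
  also have "\<dots> \<le> card C * card T"
    using card_image_le[of "C \<times> T" f] assms(1,3) by (simp add: card_cartesian_product)
  finally show ?thesis using assms(1,2) by (simp add: card_gt_0_iff)
qed

context rootless_cubic
begin

definition right_quotient :: "('a^3^3) set \<times> ('a^3^3) set \<Rightarrow> ('a^3^3) set" where
  "right_quotient = (\<lambda>(c, g). pgl_mult g (pgl_inv c))"

lemma right_quotient_class:
  "w \<noteq> 0 \<Longrightarrow> right_quotient (pgl_class (singer w), pgl_class A)
     = pgl_class (A ** matrix_inv (singer w))"
  unfolding right_quotient_def by (simp add: pgl_inv_class invertible_singer pgl_mult_class)

lemma right_quotient_in_PGL3:
  assumes "S \<subseteq> PGL3"
  shows "right_quotient ` (singer_group \<times> S) \<subseteq> PGL3"
proof clarify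
  fix c g assume "c \<in> singer_group" "g \<in> S"
  obtain w where "w \<noteq> 0" "c = pgl_class (singer w)"
    using \<open>c \<in> singer_group\<close> unfolding singer_group_def by blast
  moreover obtain A where "invertible A" "g = pgl_class A"
    using \<open>g \<in> S\<close> assms by (blast elim: PGL3_obtain_class)
  ultimately show "right_quotient (c, g) \<in> PGL3"
    by (simp add: right_quotient_class pgl_class_in_PGL3 invertible_mult invertible_matrix_inv
        invertible_singer)
qed

lemma right_quotient_class_cancel:
  assumes w: "w \<noteq> 0" "w' \<noteq> 0" and A: "invertible A" "invertible A'"
    and "has_eigenvector (A' ** matrix_inv A)"
    and "pgl_class (A ** matrix_inv (singer w)) = pgl_class (A' ** matrix_inv (singer w'))"
  shows "pgl_class (singer w) = pgl_class (singer w') \<and> pgl_class A = pgl_class A'"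
proof -
  let ?Y = "singer w" and ?Y' = "singer w'"
  have Y: "invertible ?Y" "invertible ?Y'" using w by (simp_all add: invertible_singer)
  obtain mu where mu: "mu \<noteq> 0" "A' ** matrix_inv ?Y' = mat mu ** (A ** matrix_inv ?Y)"
    using assms(6) unfolding pgl_class_eq_iff by blast
  have A': "A' = (mat mu ** (A ** matrix_inv ?Y)) ** ?Y'"
    by (metis mu(2) matrix_mul_assoc matrix_mul_rid matrix_inv_left[OF Y(2)])
  have "A' ** matrix_inv A = mat mu ** (A ** (matrix_inv ?Y ** ?Y') ** matrix_inv A)"
    unfolding A' by (simp add: matrix_mul_assoc)
  then obtain l where l: "l \<noteq> 0" "?Y' = mat l ** ?Y"
    using assms(5) has_eigenvector_conj_scaled[OF A(1) mu(1)] singer_eigenvector_scaled[OF w]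
    by metis
  then have "A' = mat (mu * l) ** ((A ** matrix_inv ?Y) ** ?Y)"
    unfolding A' by (simp only: scaled_mult_scaled)
  then have "A' = mat (mu * l) ** A"
    by (simp add: matrix_mul_assoc[symmetric] matrix_inv_left[OF Y(1)])
  then show ?thesis
    unfolding pgl_class_eq_iff using l mu(1) by (metis mult_eq_0_iff)
qed

lemma inj_on_right_quotient:
  assumes "independent_set S"
  shows "inj_on right_quotient (singer_group \<times> S)"
proof (rule inj_onI, clarify)
  fix c g c' g' assume "c \<in> singer_group" "g \<in> S" "c' \<in> singer_group" "g' \<in> S"
    and e: "right_quotient (c, g) = right_quotient (c', g')"
  obtain w w' where w: "w \<noteq> 0" "w' \<noteq> 0" "c = pgl_class (singer w)" "c' = pgl_class (singer w')"
    using \<open>c \<in> singer_group\<close> \<open>c' \<in> singer_group\<close> unfolding singer_group_def by blast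
  have "S \<subseteq> PGL3" using assms unfolding independent_set_def by blast
  then obtain A A' where A: "invertible A" "invertible A'" "g = pgl_class A" "g' = pgl_class A'"
    using \<open>g \<in> S\<close> \<open>g' \<in> S\<close> by (metis PGL3_obtain_class subsetD)
  have "\<not> derangement_adj g' g"
    using assms \<open>g \<in> S\<close> \<open>g' \<in> S\<close> unfolding independent_set_def by blast
  then have "has_eigenvector (A' ** matrix_inv A)"
    using derangement_adj_class_iff[OF A(2,1)] A(3,4) by simp
  moreover have "pgl_class (A ** matrix_inv (singer w)) = pgl_class (A' ** matrix_inv (singer w'))"
    using e w A by (simp add: right_quotient_class)
  ultimately show "c = c' \<and> g = g'"
    using right_quotient_class_cancel[OF w(1,2) A(1,2)] w(3,4) A(3,4) by blast
qed

lemma PGL3_subset_right_quotients: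
  "PGL3 \<subseteq> right_quotient ` (singer_group \<times> point_stabiliser)"
proof
  fix h :: "('a^3^3) set" assume "h \<in> PGL3"
  then obtain H where H: "invertible H" "h = pgl_class H" by (rule PGL3_obtain_class)
  \<comment> \<open>singer w maps the first basis vector to w, which H maps back to it.\<close>
  define w where "w = matrix_inv H *v axis 1 1"
  have Hw: "H *v w = axis 1 1"
    unfolding w_def by (simp add: matrix_vector_mul_assoc matrix_inv_right[OF H(1)])
  then have "w \<noteq> 0" using axis_nonzero by force
  define G where "G = H ** singer w"
  have "invertible G" unfolding G_def using H(1) \<open>w \<noteq> 0\<close> by (simp add: invertible_mult invertible_singer)
  moreover have "G *v axis 1 1 = axis 1 1"
    unfolding G_def by (simp add: matrix_vector_mul_assoc[symmetric] singer_axis Hw)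
  ultimately have "pgl_class G \<in> point_stabiliser" by (rule pgl_class_in_point_stabiliser)
  moreover have "h = right_quotient (pgl_class (singer w), pgl_class G)"
    using \<open>w \<noteq> 0\<close> unfolding right_quotient_class[OF \<open>w \<noteq> 0\<close>] G_def H(2)
    by (simp add: matrix_mul_assoc[symmetric] matrix_inv_right invertible_singer)
  moreover have "pgl_class (singer w) \<in> singer_group"
    unfolding singer_group_def using \<open>w \<noteq> 0\<close> by blast
  ultimately show "h \<in> right_quotient ` (singer_group \<times> point_stabiliser)" by blast
qed

lemma card_independent_set_le:
  assumes "independent_set (S :: ('a^3^3) set set)"
  shows "card S \<le> card (point_stabiliser :: ('a^3^3) set set)"
proof (rule card_le_card_by_injection_and_covering)
  show "singer_group \<noteq> {}" using axis_nonzero unfolding singer_group_def by blast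
  show "inj_on right_quotient (singer_group \<times> S)" using assms by (rule inj_on_right_quotient)
  show "right_quotient ` (singer_group \<times> S) \<subseteq> PGL3"
    using assms unfolding independent_set_def by (intro right_quotient_in_PGL3) blast
  show "PGL3 \<subseteq> right_quotient ` (singer_group \<times> point_stabiliser)"
    by (rule PGL3_subset_right_quotients)
qed simp_all

end

theorem mainTheorem6:
  defines "q \<equiv> CARD('a::{field,finite})"
  shows "Max (card ` {S :: ('a ^ 3 ^ 3) set set. independent_set S})
           = q ^ 3 * (q ^ 2 - 1) * (q - 1)"
proof -
  obtain r0 r1 r2 :: 'a where "rootless_cubic r0 r1 r2"
    using exists_rootless_monic_cubic unfolding rootless_cubic_def by blast
  then have "card S \<le> card (point_stabiliser :: ('a^3^3) set set)"
    if "independent_set (S :: ('a^3^3) set set)" for S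
    using rootless_cubic.card_independent_set_le that by blast
  then have "Max (card ` {S :: ('a^3^3) set set. independent_set S}) = card (point_stabiliser :: ('a^3^3) set set)"
    using independent_set_point_stabiliser by (intro Max_eqI) auto
  then show ?thesis unfolding card_point_stabiliser q_def .
qed

end
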